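(* For every $\delta>0$, $$D(\mathbf c,Q+\delta\,\mathrm{id}_E)\le D(\mathbf c,Q)=\lim_{\delta\downarrow0}D(\mathbf c,Q+\delta\,\mathrm{id}_E).$$ In particular $\delta\mapsto D(\mathbf c,Q+\delta\,\mathrm{id}_E)$ is non-increasing on $[0,\infty)$ and right-continuous at $0$. The same statements hold with $D$ replaced by $D_g$ or by $D_s$.
   Context: Let $E_i=\mathbb{R}^{d_i}$, $E=\bigoplus_{i=1}^n E_i$, $\pi_i:E\to E_i$ the coordinate projection. Fix a symmetric linear map $Q$ on $E$ and positive reals $\mathbf c=(c_i)_{i=1}^n$. $\mathcal P(E_i)$: Borel probability measures on $E_i$ absolutely continuous w.r.t. Lebesgue with finite second moments; $h(\mu_i)=-\int\rho_i\log\rho_i$ for density $\rho_i$. $\Pi(\mu_1,\dots,\mu_n)$: probability measures $\mu$ on $E$ with $\pi_i\sharp\mu=\mu_i$. Inequality $(\star)$: $\sum_i c_ih(\mu_i)\le\sup_{\mu\in\Pi(\mu_1,\dots,\mu_n)}\int_E\langle x,Qx\rangle d\mu+D$. $D(\mathbf c,Q)$, $D_g(\mathbf c,Q)$, $D_s(\mathbf c,Q)\in\mathbb R\cup\{+\infty\}$ are the smallest constants $D$ for which $(\star)$ holds for all centered $\mu_i\in\mathcal P(E_i)$, for all centered nondegenerate Gaussian $\mu_i$, and for all symmetric $\mu_i\in\mathcal P(E_i)$ (i.e. $\mu_i(B)=\mu_i(-B)$ for Borel $B$), respectively. *)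

theory Defs
  imports "HOL-Probability.Probability"
begin

text \<open>The block space E_i = R^(d i) is modelled as the product
  measure space Eb d i = PiM {..<d i} (\<lambda>_. lborel) (Lebesgue measure on R^(d i)),
  the total space E = (+)_{i<n} E_i as Etot d n = PiM {..<n} (\<lambda>i. Eb d i);
  the coordinate projection pi_i is (\<lambda>x. x i).  A linear map on E is given by its
  matrix Q indexed by pairs (block i, coordinate a), with a < d i.\<close>

definition Eb :: "(nat \<Rightarrow> nat) \<Rightarrow> nat \<Rightarrow> (nat \<Rightarrow> real) measure" where
  "Eb d i = PiM {..<d i} (\<lambda>_. lborel)"

definition Etot :: "(nat \<Rightarrow> nat) \<Rightarrow> nat \<Rightarrow> (nat \<Rightarrow> nat \<Rightarrow> real) measure" where
  "Etot d n = PiM {..<n} (\<lambda>i. Eb d i)"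

definition quad :: "(nat \<Rightarrow> nat) \<Rightarrow> nat \<Rightarrow> (nat \<times> nat \<Rightarrow> nat \<times> nat \<Rightarrow> real)
    \<Rightarrow> (nat \<Rightarrow> nat \<Rightarrow> real) \<Rightarrow> real" where
  "quad d n Q x = (\<Sum>i<n. \<Sum>a<d i. \<Sum>j<n. \<Sum>b<d j. x i a * Q (i,a) (j,b) * x j b)"

definition symmetric_map :: "(nat \<Rightarrow> nat) \<Rightarrow> nat \<Rightarrow> (nat \<times> nat \<Rightarrow> nat \<times> nat \<Rightarrow> real) \<Rightarrow> bool" where
  "symmetric_map d n Q \<longleftrightarrow> (\<forall>i<n. \<forall>a<d i. \<forall>j<n. \<forall>b<d j. Q (i,a) (j,b) = Q (j,b) (i,a))"

definition shift_id :: "(nat \<times> nat \<Rightarrow> nat \<times> nat \<Rightarrow> real) \<Rightarrow> real \<Rightarrow> (nat \<times> nat \<Rightarrow> nat \<times> nat \<Rightarrow> real)" where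
  "shift_id Q \<delta> = (\<lambda>p q. Q p q + (if p = q then \<delta> else 0))"

text \<open>Differential entropy h(mu) = - \<integral> rho log rho, with rho the Lebesgue density,
  as an extended real (positive part minus negative part of -rho log rho).\<close>
definition entropy_h :: "(nat \<Rightarrow> nat) \<Rightarrow> nat \<Rightarrow> (nat \<Rightarrow> real) measure \<Rightarrow> ereal" where
  "entropy_h d i \<mu> =
     (let \<rho> = (\<lambda>x. enn2real (RN_deriv (Eb d i) \<mu> x)) in
      enn2ereal (\<integral>\<^sup>+ x. ennreal (\<rho> x * max 0 (- ln (\<rho> x))) \<partial>Eb d i)
      - enn2ereal (\<integral>\<^sup>+ x. ennreal (\<rho> x * max 0 (ln (\<rho> x))) \<partial>Eb d i))"

definition in_P :: "(nat \<Rightarrow> nat) \<Rightarrow> nat \<Rightarrow> (nat \<Rightarrow> real) measure \<Rightarrow> bool" where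
  "in_P d i \<mu> \<longleftrightarrow> sets \<mu> = sets (Eb d i) \<and> prob_space \<mu> \<and> absolutely_continuous (Eb d i) \<mu>
     \<and> (\<integral>\<^sup>+ x. ennreal (\<Sum>a<d i. (x a)\<^sup>2) \<partial>\<mu>) < \<infinity>"

definition centered :: "(nat \<Rightarrow> nat) \<Rightarrow> nat \<Rightarrow> (nat \<Rightarrow> real) measure \<Rightarrow> bool" where
  "centered d i \<mu> \<longleftrightarrow> (\<forall>a<d i. (\<integral>x. x a \<partial>\<mu>) = 0)"

definition symmetric_meas :: "(nat \<Rightarrow> nat) \<Rightarrow> nat \<Rightarrow> (nat \<Rightarrow> real) measure \<Rightarrow> bool" where
  "symmetric_meas d i \<mu> \<longleftrightarrow>
     (\<forall>B\<in>sets (Eb d i). emeasure \<mu> B = emeasure \<mu> ((\<lambda>x. \<lambda>a\<in>{..<d i}. - x a) ` B))"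

definition std_gauss :: "(nat \<Rightarrow> nat) \<Rightarrow> nat \<Rightarrow> (nat \<Rightarrow> real) measure" where
  "std_gauss d i = PiM {..<d i} (\<lambda>_. density lborel std_normal_density)"

definition centered_nondeg_gaussian :: "(nat \<Rightarrow> nat) \<Rightarrow> nat \<Rightarrow> (nat \<Rightarrow> real) measure \<Rightarrow> bool" where
  "centered_nondeg_gaussian d i \<mu> \<longleftrightarrow>
     (\<exists>L L' :: nat \<Rightarrow> nat \<Rightarrow> real.
        (\<forall>a<d i. \<forall>b<d i. (\<Sum>k<d i. L a k * L' k b) = (if a = b then 1 else 0)) \<and>
        \<mu> = distr (std_gauss d i) (Eb d i) (\<lambda>x. \<lambda>a\<in>{..<d i}. \<Sum>b<d i. L a b * x b))"

definition couplings :: "(nat \<Rightarrow> nat) \<Rightarrow> nat \<Rightarrow> (nat \<Rightarrow> (nat \<Rightarrow> real) measure)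
    \<Rightarrow> (nat \<Rightarrow> nat \<Rightarrow> real) measure set" where
  "couplings d n M = {\<mu>. sets \<mu> = sets (Etot d n) \<and> prob_space \<mu> \<and>
       (\<forall>i<n. distr \<mu> (Eb d i) (\<lambda>x. x i) = M i)}"

definition D_gen :: "((nat \<Rightarrow> nat) \<Rightarrow> nat \<Rightarrow> (nat \<Rightarrow> real) measure \<Rightarrow> bool)
    \<Rightarrow> (nat \<Rightarrow> nat) \<Rightarrow> nat \<Rightarrow> (nat \<Rightarrow> real) \<Rightarrow> (nat \<times> nat \<Rightarrow> nat \<times> nat \<Rightarrow> real) \<Rightarrow> ereal" where
  "D_gen cls d n c Q = Inf (ereal ` {D::real. \<forall>M. (\<forall>i<n. cls d i (M i)) \<longrightarrow>
       (\<Sum>i<n. ereal (c i) * entropy_h d i (M i))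
         \<le> (SUP \<mu>\<in>couplings d n M. ereal (\<integral>x. quad d n Q x \<partial>\<mu>)) + ereal D})"

definition D_c where "D_c = D_gen (\<lambda>d i \<mu>. in_P d i \<mu> \<and> centered d i \<mu>)"
definition D_g where "D_g = D_gen (\<lambda>d i \<mu>. in_P d i \<mu> \<and> centered_nondeg_gaussian d i \<mu>)"
definition D_s where "D_s = D_gen (\<lambda>d i \<mu>. in_P d i \<mu> \<and> symmetric_meas d i \<mu>)"

end

theory Submission
  imports Defs
begin

text \<open>For marginals with finite second moments and any coupling \<mu> of them,
  \<integral>\<langle>x, (Q + \<delta> id) x\<rangle> d\<mu> = \<integral>\<langle>x, Q x\<rangle> d\<mu> + \<delta> m, where m \<ge> 0 is the sum of the second
  moments of the marginals and so does not depend on \<mu>. Hence the supremum over couplings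
  is raised by exactly \<delta> m, and D(c, Q + \<delta> id) is the best constant of a family of
  constraints, one per admissible family of marginals, each relaxed by \<delta> m. Relaxing constraints
  can only lower the best constant; conversely a family of marginals that violates a constant
  r for Q still violates any r' < r for Q + \<delta> id as soon as \<delta> m < r - r', which gives
  the limit as \<delta> \<down> 0.\<close>

definition best_const :: "'a set \<Rightarrow> ('a \<Rightarrow> ereal) \<Rightarrow> ('a \<Rightarrow> ereal) \<Rightarrow> ereal" where
  "best_const K L S = Inf (ereal ` {D. \<forall>M\<in>K. L M \<le> S M + ereal D})"

lemma best_const_le:
  assumes "\<forall>M\<in>K. L M \<le> S M + ereal D"
  shows "best_const K L S \<le> ereal D"
  unfolding best_const_def using assms by (intro Inf_lower) auto

lemma le_best_const:
  assumes "\<And>D. \<forall>M\<in>K. L M \<le> S M + ereal D \<Longrightarrow> r \<le> D"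
  shows "ereal r \<le> best_const K L S"
  unfolding best_const_def using assms by (intro Inf_greatest) auto

lemma best_const_cong:
  assumes "\<And>M. M \<in> K \<Longrightarrow> S M = S' M"
  shows "best_const K L S = best_const K L S'"
  unfolding best_const_def using assms by simp

lemma best_const_antimono:
  assumes "\<And>M. M \<in> K \<Longrightarrow> S M \<le> S' M"
  shows "best_const K L S' \<le> best_const K L S"
  unfolding best_const_def
proof (intro Inf_superset_mono image_mono subsetI CollectI ballI)
  fix D M assume "D \<in> {D. \<forall>M\<in>K. L M \<le> S M + ereal D}" and M: "M \<in> K"
  then have "L M \<le> S M + ereal D" by blast
  also have "\<dots> \<le> S' M + ereal D" using assms[OF M] by (rule add_right_mono)
  finally show "L M \<le> S' M + ereal D" .
qed

lemma tendsto_best_const_shift: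
  assumes m_nonneg: "\<And>M. M \<in> K \<Longrightarrow> 0 \<le> m M"
  shows "((\<lambda>\<delta>. best_const K L (\<lambda>M. S M + ereal (\<delta> * m M))) \<longlongrightarrow> best_const K L S) (at_right 0)"
proof (rule order_tendstoI)
  fix z assume z: "best_const K L S < z"
  show "\<forall>\<^sub>F \<delta> in at_right 0. best_const K L (\<lambda>M. S M + ereal (\<delta> * m M)) < z"
    using eventually_at_right_less[of "0::real"]
  proof (rule eventually_mono)
    fix \<delta> :: real assume "0 < \<delta>"
    then have "best_const K L (\<lambda>M. S M + ereal (\<delta> * m M)) \<le> best_const K L S"
      using m_nonneg by (intro best_const_antimono) (simp add: add_increasing2)
    then show "best_const K L (\<lambda>M. S M + ereal (\<delta> * m M)) < z" using z by simp
  qed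
next
  fix y assume "y < best_const K L S"
  then obtain r where r: "y < ereal r" "ereal r < best_const K L S" using ereal_dense2 by blast
  then obtain r' where r': "y < ereal r'" "r' < r" using ereal_dense2 by fastforce
  obtain M where M: "M \<in> K" and violated: "\<not> L M \<le> S M + ereal r"
    using best_const_le[of K L S r] r(2) by fastforce
  have "((\<lambda>\<delta>. \<delta> * m M) \<longlongrightarrow> 0 * m M) (at_right 0)"
    by (intro tendsto_intros)
  then have "\<forall>\<^sub>F \<delta> in at_right 0. \<delta> * m M < r - r'"
    using r'(2) by (intro order_tendstoD) auto
  then show "\<forall>\<^sub>F \<delta> in at_right 0. y < best_const K L (\<lambda>M. S M + ereal (\<delta> * m M))"
  proof (rule eventually_mono)
    fix \<delta> :: real assume small: "\<delta> * m M < r - r'"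
    have "ereal r' \<le> best_const K L (\<lambda>M. S M + ereal (\<delta> * m M))"
    proof (rule le_best_const, rule ccontr)
      fix D assume feasible: "\<forall>M\<in>K. L M \<le> S M + ereal (\<delta> * m M) + ereal D" and "\<not> r' \<le> D"
      then have "\<delta> * m M + D \<le> r" using small by simp
      have "L M \<le> S M + ereal (\<delta> * m M) + ereal D" using feasible M by blast
      also have "\<dots> = S M + ereal (\<delta> * m M + D)" by (simp add: add.assoc)
      also have "\<dots> \<le> S M + ereal r" using \<open>\<delta> * m M + D \<le> r\<close> by (intro add_left_mono) simp
      finally show False using violated by simp
    qed
    then show "y < best_const K L (\<lambda>M. S M + ereal (\<delta> * m M))" using r'(1) by simp
  qed
qed

lemma measurable_block_Etot:
  assumes "sets \<mu> = sets (Etot d n)" "i < n"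
  shows "(\<lambda>x. x i) \<in> measurable \<mu> (Eb d i)"
proof -
  have "(\<lambda>x. x i) \<in> measurable (Etot d n) (Eb d i)"
    unfolding Etot_def using assms(2) by (intro measurable_component_singleton) auto
  then show ?thesis unfolding measurable_cong_sets[OF assms(1) refl] .
qed

lemma measurable_coord_Eb:
  assumes "sets N = sets (Eb d i)" "a < d i"
  shows "(\<lambda>y. y a) \<in> borel_measurable N"
proof -
  have "(\<lambda>y. y a) \<in> measurable (Eb d i) lborel"
    unfolding Eb_def using assms(2) by (intro measurable_component_singleton) auto
  then show ?thesis unfolding measurable_cong_sets[OF assms(1) refl] by simp
qed

lemma in_P_integrable_coord_sq:
  assumes P: "in_P d i \<nu>" and a: "a < d i"
  shows "integrable \<nu> (\<lambda>y. (y a)\<^sup>2)"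
proof (rule integrableI_nonneg)
  have "sets \<nu> = sets (Eb d i)" using P by (simp add: in_P_def)
  from measurable_coord_Eb[OF this a]
  show "(\<lambda>y. (y a)\<^sup>2) \<in> borel_measurable \<nu>" by measurable
  have "(\<integral>\<^sup>+ y. ennreal ((y a)\<^sup>2) \<partial>\<nu>) \<le> (\<integral>\<^sup>+ y. ennreal (\<Sum>a<d i. (y a)\<^sup>2) \<partial>\<nu>)"
    using a by (intro nn_integral_mono ennreal_leI member_le_sum) auto
  also have "\<dots> < \<infinity>" using P by (simp add: in_P_def)
  finally show "(\<integral>\<^sup>+ y. ennreal ((y a)\<^sup>2) \<partial>\<nu>) < \<infinity>" .
qed simp

lemma coupling_coord_sq:
  assumes P: "in_P d i (M i)" and \<mu>: "\<mu> \<in> couplings d n M" and i: "i < n" and a: "a < d i"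
  shows "integrable \<mu> (\<lambda>x. (x i a)\<^sup>2)"
    and "(\<integral>x. (x i a)\<^sup>2 \<partial>\<mu>) = (\<integral>y. (y a)\<^sup>2 \<partial>M i)"
proof -
  have "sets \<mu> = sets (Etot d n)" and marginal: "distr \<mu> (Eb d i) (\<lambda>x. x i) = M i"
    using \<mu> i by (auto simp: couplings_def)
  note block = measurable_block_Etot[OF this(1) i]
  have sq: "(\<lambda>y. (y a)\<^sup>2) \<in> borel_measurable (Eb d i)"
    using measurable_coord_Eb[of "Eb d i", OF refl a] by measurable
  show "integrable \<mu> (\<lambda>x. (x i a)\<^sup>2)"
    using in_P_integrable_coord_sq[OF P a] integrable_distr_eq[OF block sq] marginal by simp
  show "(\<integral>x. (x i a)\<^sup>2 \<partial>\<mu>) = (\<integral>y. (y a)\<^sup>2 \<partial>M i)"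
    using integral_distr[OF block sq] marginal by simp
qed

lemma abs_mult_le_sum_squares: "\<bar>u * v\<bar> \<le> u\<^sup>2 + (v::real)\<^sup>2"
proof -
  have "2 * \<bar>u\<bar> * \<bar>v\<bar> \<le> u\<^sup>2 + v\<^sup>2" using sum_squares_bound[of "\<bar>u\<bar>" "\<bar>v\<bar>"] by simp
  moreover have "0 \<le> \<bar>u\<bar> * \<bar>v\<bar>" by simp
  ultimately show ?thesis unfolding abs_mult by linarith
qed

lemma integrable_quad_coupling:
  assumes P: "\<forall>i<n. in_P d i (M i)" and \<mu>: "\<mu> \<in> couplings d n M"
  shows "integrable \<mu> (quad d n Q)"
  unfolding quad_def
proof (intro Bochner_Integration.integrable_sum)
  fix i a j b assume "i \<in> {..<n}" "a \<in> {..<d i}" "j \<in> {..<n}" "b \<in> {..<d j}"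
  then have i: "i < n" "a < d i" and j: "j < n" "b < d j" by auto
  let ?C = "Q (i, a) (j, b)"
  have "sets \<mu> = sets (Etot d n)" using \<mu> by (simp add: couplings_def)
  note coord = measurable_compose[OF measurable_block_Etot[OF this] measurable_coord_Eb[OF refl]]
  have bound: "integrable \<mu> (\<lambda>x. \<bar>?C\<bar> * ((x i a)\<^sup>2 + (x j b)\<^sup>2))"
    using coupling_coord_sq(1)[OF P[rule_format] \<mu>] i j by auto
  show "integrable \<mu> (\<lambda>x. x i a * ?C * x j b)"
  proof (rule Bochner_Integration.integrable_bound[OF bound])
    show "(\<lambda>x. x i a * ?C * x j b) \<in> borel_measurable \<mu>"
      using coord[OF i] coord[OF j] by measurable
    show "AE x in \<mu>. norm (x i a * ?C * x j b) \<le> norm (\<bar>?C\<bar> * ((x i a)\<^sup>2 + (x j b)\<^sup>2))"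
    proof (intro AE_I2)
      fix x :: "nat \<Rightarrow> nat \<Rightarrow> real"
      have "\<bar>?C\<bar> * \<bar>x i a * x j b\<bar> \<le> \<bar>?C\<bar> * ((x i a)\<^sup>2 + (x j b)\<^sup>2)"
        by (intro mult_left_mono abs_mult_le_sum_squares) simp
      then show "norm (x i a * ?C * x j b) \<le> norm (\<bar>?C\<bar> * ((x i a)\<^sup>2 + (x j b)\<^sup>2))"
        by (simp add: abs_mult mult_ac)
    qed
  qed
qed

lemma sum_sum_delta:
  fixes g :: "nat \<Rightarrow> nat \<Rightarrow> real"
  assumes "i < n" "a < d i"
  shows "(\<Sum>j<n. \<Sum>b<d j. if i = j \<and> a = b then g j b else 0) = g i a"
proof -
  have "(\<Sum>j<n. \<Sum>b<d j. if i = j \<and> a = b then g j b else 0) = (\<Sum>j<n. if j = i then g i a else 0)"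
    using assms by (intro sum.cong refl) auto
  then show ?thesis using assms by simp
qed

lemma shift_id_0: "shift_id Q 0 = Q"
  by (simp add: shift_id_def fun_eq_iff)

lemma quad_shift_id:
  "quad d n (shift_id Q \<delta>) x = quad d n Q x + \<delta> * (\<Sum>i<n. \<Sum>a<d i. (x i a)\<^sup>2)"
proof -
  have "x i a * shift_id Q \<delta> (i, a) (j, b) * x j b
      = x i a * Q (i, a) (j, b) * x j b + (if i = j \<and> a = b then \<delta> * (x i a * x j b) else 0)"
    for i a j b by (simp add: shift_id_def algebra_simps)
  then have "quad d n (shift_id Q \<delta>) x = quad d n Q x +
      (\<Sum>i<n. \<Sum>a<d i. \<Sum>j<n. \<Sum>b<d j. if i = j \<and> a = b then \<delta> * (x i a * x j b) else 0)"
    unfolding quad_def by (simp only: sum.distrib)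
  also have "\<dots> = quad d n Q x + (\<Sum>i<n. \<Sum>a<d i. \<delta> * (x i a)\<^sup>2)"
    by (intro arg_cong[where f="(+) _"] sum.cong refl)
      (auto simp: sum_sum_delta[where g="\<lambda>j b. \<delta> * (x _ _ * x j b)"] power2_eq_square)
  finally show ?thesis by (simp add: sum_distrib_left)
qed

definition second_moment :: "(nat \<Rightarrow> nat) \<Rightarrow> nat \<Rightarrow> (nat \<Rightarrow> (nat \<Rightarrow> real) measure) \<Rightarrow> real" where
  "second_moment d n M = (\<Sum>i<n. \<Sum>a<d i. \<integral>y. (y a)\<^sup>2 \<partial>M i)"

lemma second_moment_nonneg: "0 \<le> second_moment d n M"
  unfolding second_moment_def by (intro sum_nonneg Bochner_Integration.integral_nonneg) auto

lemma integral_quad_shift_id: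
  assumes P: "\<forall>i<n. in_P d i (M i)" and \<mu>: "\<mu> \<in> couplings d n M"
  shows "(\<integral>x. quad d n (shift_id Q \<delta>) x \<partial>\<mu>) = (\<integral>x. quad d n Q x \<partial>\<mu>) + \<delta> * second_moment d n M"
proof -
  note sq = coupling_coord_sq[OF P[rule_format] \<mu>]
  have sq_norm: "integrable \<mu> (\<lambda>x. \<Sum>i<n. \<Sum>a<d i. (x i a)\<^sup>2)"
    using sq(1) by (intro Bochner_Integration.integrable_sum) auto
  have "(\<integral>x. quad d n (shift_id Q \<delta>) x \<partial>\<mu>)
      = (\<integral>x. quad d n Q x + \<delta> * (\<Sum>i<n. \<Sum>a<d i. (x i a)\<^sup>2) \<partial>\<mu>)"
    by (simp add: quad_shift_id)
  also have "\<dots> = (\<integral>x. quad d n Q x \<partial>\<mu>) + \<delta> * (\<integral>x. (\<Sum>i<n. \<Sum>a<d i. (x i a)\<^sup>2) \<partial>\<mu>)"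
    using integrable_quad_coupling[OF P \<mu>] sq_norm by simp
  also have "\<dots> = (\<integral>x. quad d n Q x \<partial>\<mu>) + \<delta> * (\<Sum>i<n. \<Sum>a<d i. \<integral>x. (x i a)\<^sup>2 \<partial>\<mu>)"
    using sq(1) by (subst Bochner_Integration.integral_sum)
      (auto intro!: sum.cong Bochner_Integration.integral_sum)
  also have "\<dots> = (\<integral>x. quad d n Q x \<partial>\<mu>) + \<delta> * second_moment d n M"
    unfolding second_moment_def using sq(2) by simp
  finally show ?thesis .
qed

definition sup_coupling_quad ::
    "(nat \<Rightarrow> nat) \<Rightarrow> nat \<Rightarrow> (nat \<times> nat \<Rightarrow> nat \<times> nat \<Rightarrow> real) \<Rightarrow> (nat \<Rightarrow> (nat \<Rightarrow> real) measure) \<Rightarrow> ereal"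
  where "sup_coupling_quad d n Q M = (SUP \<mu>\<in>couplings d n M. ereal (\<integral>x. quad d n Q x \<partial>\<mu>))"

lemma sup_coupling_quad_shift_id:
  assumes P: "\<forall>i<n. in_P d i (M i)"
  shows "sup_coupling_quad d n (shift_id Q \<delta>) M = sup_coupling_quad d n Q M + ereal (\<delta> * second_moment d n M)"
proof (cases "couplings d n M = {}")
  case True
  then show ?thesis by (simp add: sup_coupling_quad_def bot_ereal_def)
next
  case False
  have "sup_coupling_quad d n (shift_id Q \<delta>) M
      = (SUP \<mu>\<in>couplings d n M. ereal (\<integral>x. quad d n Q x \<partial>\<mu>) + ereal (\<delta> * second_moment d n M))"
    unfolding sup_coupling_quad_def by (intro SUP_cong) (simp_all add: integral_quad_shift_id[OF P])
  also have "\<dots> = sup_coupling_quad d n Q M + ereal (\<delta> * second_moment d n M)"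
    unfolding sup_coupling_quad_def by (rule SUP_ereal_add_left[OF False]) simp
  finally show ?thesis .
qed

lemma D_gen_eq_best_const:
  "D_gen cls d n c Q = best_const {M. \<forall>i<n. cls d i (M i)}
     (\<lambda>M. \<Sum>i<n. ereal (c i) * entropy_h d i (M i)) (sup_coupling_quad d n Q)"
  unfolding D_gen_def best_const_def sup_coupling_quad_def by simp

lemma D_gen_shift_id:
  assumes cls: "\<forall>i \<mu>. cls d i \<mu> \<longrightarrow> in_P d i \<mu>"
  shows "D_gen cls d n c (shift_id Q \<delta>) = best_const {M. \<forall>i<n. cls d i (M i)}
     (\<lambda>M. \<Sum>i<n. ereal (c i) * entropy_h d i (M i))
     (\<lambda>M. sup_coupling_quad d n Q M + ereal (\<delta> * second_moment d n M))"
  unfolding D_gen_eq_best_const using cls by (intro best_const_cong) (simp add: sup_coupling_quad_shift_id)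

lemma D_gen_shift_id_antimono:
  assumes cls: "\<forall>i \<mu>. cls d i \<mu> \<longrightarrow> in_P d i \<mu>" and "\<delta>1 \<le> \<delta>2"
  shows "D_gen cls d n c (shift_id Q \<delta>2) \<le> D_gen cls d n c (shift_id Q \<delta>1)"
  unfolding D_gen_shift_id[of cls d, OF cls] using \<open>\<delta>1 \<le> \<delta>2\<close>
  by (intro best_const_antimono add_left_mono) (simp add: mult_right_mono second_moment_nonneg)

lemma tendsto_D_gen_shift_id:
  assumes cls: "\<forall>i \<mu>. cls d i \<mu> \<longrightarrow> in_P d i \<mu>"
  shows "((\<lambda>\<delta>. D_gen cls d n c (shift_id Q \<delta>)) \<longlongrightarrow> D_gen cls d n c Q) (at_right 0)"
  unfolding D_gen_shift_id[of cls d, OF cls] unfolding D_gen_eq_best_const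
  by (rule tendsto_best_const_shift) (rule second_moment_nonneg)

theorem lemma8:
  fixes d :: "nat \<Rightarrow> nat" and n :: nat and c :: "nat \<Rightarrow> real"
    and Q :: "nat \<times> nat \<Rightarrow> nat \<times> nat \<Rightarrow> real"
  assumes "n \<ge> 1" and "\<forall>i<n. d i \<ge> 1"
    and "\<forall>i<n. c i > 0"
    and "symmetric_map d n Q"
  shows "\<forall>DD \<in> {D_c, D_g, D_s}.
           (\<forall>\<delta>>0. DD d n c (shift_id Q \<delta>) \<le> DD d n c Q)
         \<and> ((\<lambda>\<delta>. DD d n c (shift_id Q \<delta>)) \<longlongrightarrow> DD d n c Q) (at_right 0)
         \<and> (\<forall>\<delta>1 \<delta>2. 0 \<le> \<delta>1 \<and> \<delta>1 \<le> \<delta>2 \<longrightarrow> DD d n c (shift_id Q \<delta>2) \<le> DD d n c (shift_id Q \<delta>1))"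
proof -
  have "(\<forall>\<delta>>0. D_gen cls d n c (shift_id Q \<delta>) \<le> D_gen cls d n c Q)
      \<and> ((\<lambda>\<delta>. D_gen cls d n c (shift_id Q \<delta>)) \<longlongrightarrow> D_gen cls d n c Q) (at_right 0)
      \<and> (\<forall>\<delta>1 \<delta>2. 0 \<le> \<delta>1 \<and> \<delta>1 \<le> \<delta>2 \<longrightarrow>
           D_gen cls d n c (shift_id Q \<delta>2) \<le> D_gen cls d n c (shift_id Q \<delta>1))"
    if cls: "\<forall>i \<mu>. cls d i \<mu> \<longrightarrow> in_P d i \<mu>" for cls
    using D_gen_shift_id_antimono[of cls d 0, OF cls] D_gen_shift_id_antimono[of cls d, OF cls]
      tendsto_D_gen_shift_id[of cls d, OF cls]
    by (simp add: shift_id_0)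
  then show ?thesis unfolding D_c_def D_g_def D_s_def by simp
qed

end
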